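(* $$\sum_{n \geq 0} \binom{4n}{2n} \binom{2n}{n} \frac{ H_{n} - H_{n - 1/2} }{64^{n}} = \frac{\pi}{\sqrt{2}} - \frac{2 \sqrt{2}}{\pi} \ln^{2}\left( \sqrt{2} + 1 \right).$$
   Context: For real $a > -1$, the generalized harmonic number is $H_a = \sum_{k\ge 1}\left(\frac1k - \frac1{k+a}\right)$ (equivalently $H_a^{(b)} = \zeta(b) - \zeta(b,a+1)$ with $\zeta(b,\cdot)$ the Hurwitz zeta function, taken in the limit sense for $b=1$); it agrees with the usual harmonic number for nonnegative integers $a$, and e.g. $H_{-1/2} = -2\ln 2$. *)

theory Defs
  imports "HOL-Analysis.Analysis"
begin

definition gen_harm :: "real \<Rightarrow> real" where
  "gen_harm a = (\<Sum>k. 1 / real (Suc k) - 1 / (real (Suc k) + a))"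

end

theory Submission
  imports Defs
begin

text \<open>
  Write c n = C(2n,n)/4^n and d n = H n - H (n - 1/2), so that the n-th term is
  c (2n) * c n * d n. Both factors are integrals: d n = int_0^1 2u^(2n)/(1+u) du, and
  c (2n) = (2/pi) int_0^(pi/2) sin^(4n) t dt by Wallis. Summing under the integrals with
  sum_n c n x^n = 1/sqrt(1-x) turns the series into (4/pi) int_0^(pi/2) L (sqrt (1 - sin^4 t)) dt,
  where L z = ln(1+z)/z. The substitution sin t = (1-y^2)/sqrt(1+6y^2+y^4) removes the square
  root and gives (2 sqrt 2/pi) int_0^1 (4 ln(1+y) - ln(1+6y^2+y^4))/y dy. Since
  1+6y^2+y^4 = (1+a y^2)(1+y^2/a) with a = (1+sqrt 2)^2, this is a combination of values of
  Lambda x = int_0^x L t dt, which are known from Lambda 1 = pi^2/12 and the inversion formula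
  Lambda R + Lambda (1/R) = 2 Lambda 1 + (ln R)^2/2.
\<close>

section \<open>Central binomial coefficients\<close>

definition central_ratio :: "nat \<Rightarrow> real" where
  "central_ratio n = real ((2*n) choose n) / 4^n"

lemma central_ratio_pos: "central_ratio n > 0"
  by (simp add: central_ratio_def)

lemma central_ratio_Suc: "central_ratio (Suc n) = central_ratio n * (2*n+1) / (2*n+2)"
proof -
  have fact_form: "real ((2*m) choose m) = fact (2*m) / (fact m)^2" for m
    by (simp add: binomial_fact power2_eq_square)
  have "fact (2 * Suc n) = (2*n+2) * (2*n+1) * (fact (2*n) :: real)"
    by (simp add: algebra_simps)
  then show ?thesis unfolding central_ratio_def fact_form
    by (simp add: divide_simps) (simp add: algebra_simps power2_eq_square)
qed

lemma central_ratio_eq_gbinomial: "central_ratio n = (-1)^n * ((-1/2) gchoose n)"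
proof (induction n)
  case 0
  show ?case by (simp add: central_ratio_def)
next
  case (Suc n)
  have "(-1/2) * ((-1/2) gchoose n) = real n * ((-1/2) gchoose n) + real (Suc n) * ((-1/2::real) gchoose Suc n)"
    by (rule gbinomial_mult_1)
  then have "(2 * real n + 2) * ((-1/2) gchoose Suc n) = - (2 * real n + 1) * ((-1/2) gchoose n)"
    by (simp add: algebra_simps)
  then have "(-1/2) gchoose Suc n = - ((-1/2) gchoose n) * (2 * real n + 1) / (2 * real n + 2)"
    by (simp add: field_simps)
  with Suc show ?case by (simp add: central_ratio_Suc mult.assoc add.commute)
qed

lemma central_ratio_sums:
  assumes "\<bar>x\<bar> < 1"
  shows "(\<lambda>n. central_ratio n * x^n) sums (1 / sqrt (1 - x))"
proof -
  have series: "(\<lambda>n. ((-1/2) gchoose n) * (-x)^n) sums (1 + (-x)) powr (-1/2)"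
    using gen_binomial_real[of "-x"] assms by (simp only: abs_minus_cancel)
  have sum_eq: "(1 + (-x)) powr (-1/2) = 1 / sqrt (1 - x)"
    using assms by (simp add: powr_minus_divide powr_half_sqrt)
  have term_eq: "((-1/2) gchoose n) * (-x)^n = central_ratio n * x^n" for n
    by (simp add: central_ratio_eq_gbinomial power_minus')
  show ?thesis using series unfolding sum_eq term_eq .
qed

lemma has_integral_sin_power_reduction:
  "((\<lambda>x. (real k + 2) * sin x ^ (k+2) - (real k + 1) * sin x ^ k) has_integral 0) {0..pi/2}"
proof -
  have "((\<lambda>x. - (sin x ^ Suc k * cos x)) has_real_derivative
          (real k + 2) * sin x ^ (k+2) - (real k + 1) * sin x ^ k) (at x)" for x
  proof -
    have "((\<lambda>x. sin x ^ Suc k) has_real_derivative real (Suc k) * sin x ^ k * cos x) (at x)"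
      using DERIV_chain2[OF DERIV_pow DERIV_sin, of "Suc k" x] by simp
    from DERIV_minus[OF DERIV_mult[OF this DERIV_cos]]
    have deriv: "((\<lambda>x. - (sin x ^ Suc k * cos x)) has_real_derivative
            - (real (Suc k) * sin x ^ k * cos x * cos x + - sin x * sin x ^ Suc k)) (at x)" .
    have "- (real (Suc k) * sin x ^ k * cos x * cos x + - sin x * sin x ^ Suc k)
        = sin x ^ (k+2) - real (Suc k) * sin x ^ k * (cos x)^2"
      by (simp add: power2_eq_square algebra_simps)
    also have "\<dots> = (real k + 2) * sin x ^ (k+2) - (real k + 1) * sin x ^ k"
      unfolding cos_squared_eq by (simp add: power_add power2_eq_square algebra_simps)
    finally show ?thesis using deriv by simp
  qed
  then have "((\<lambda>x. (real k + 2) * sin x ^ (k+2) - (real k + 1) * sin x ^ k) has_integral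
      (- (sin (pi/2) ^ Suc k * cos (pi/2))) - (- (sin 0 ^ Suc k * cos 0))) {0..pi/2}"
    by (intro fundamental_theorem_of_calculus)
       (auto simp: has_real_derivative_iff_has_vector_derivative[symmetric] intro: has_field_derivative_at_within)
  then show ?thesis by simp
qed

lemma has_integral_sin_power_even:
  "((\<lambda>x. sin x ^ (2*m)) has_integral pi/2 * central_ratio m) {0..pi/2}"
proof (induction m)
  case 0
  show ?case using has_integral_const_real[of "1::real" 0 "pi/2"] by (simp add: central_ratio_def)
next
  case (Suc m)
  have "((\<lambda>x. (real (2*m) + 2) * sin x ^ (2*m+2)) has_integral (real (2*m) + 1) * (pi/2 * central_ratio m)) {0..pi/2}"
    using has_integral_add[OF has_integral_sin_power_reduction[of "2*m"] has_integral_mult_right[OF Suc.IH, of "real (2*m) + 1"]]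
    by simp
  from has_integral_mult_right[OF this, of "1 / (real (2*m) + 2)"]
  have int: "((\<lambda>x. sin x ^ (2 * Suc m)) has_integral
      1 / (real (2*m) + 2) * ((real (2*m) + 1) * (pi/2 * central_ratio m))) {0..pi/2}"
    by (simp add: mult.assoc[symmetric])
  have val: "1 / (real (2*m) + 2) * ((real (2*m) + 1) * (pi/2 * central_ratio m)) = pi/2 * central_ratio (Suc m)"
    by (simp add: central_ratio_Suc field_simps)
  show ?case using int unfolding val .
qed

section \<open>Termwise integration of nonnegative series\<close>

lemma sums_integral_nonneg:
  fixes f :: "nat \<Rightarrow> 'a::euclidean_space \<Rightarrow> real"
  assumes f_int: "\<And>k. (f k has_integral I k) S"
    and f_nonneg: "\<And>k x. x \<in> S \<Longrightarrow> 0 \<le> f k x"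
    and f_sums: "\<And>x. x \<in> S - N \<Longrightarrow> (\<lambda>k. f k x) sums g x"
    and "negligible N" and g_int: "g integrable_on S"
  shows "I sums integral S g"
proof -
  define T where "T = S - N"
  have on_T: "(h has_integral y) S \<longleftrightarrow> (h has_integral y) T" for h :: "'a \<Rightarrow> real" and y
    unfolding T_def
    by (rule has_integral_spike_set_eq) (auto intro: negligible_subset[OF \<open>negligible N\<close>])
  define P where "P n x = (\<Sum>k<n. f k x)" for n x
  have P_int: "(P n has_integral (\<Sum>k<n. I k)) T" for n
    unfolding P_def on_T[symmetric] by (intro has_integral_sum) (auto intro: f_int)
  have g_T: "(g has_integral integral S g) T"
    using g_int on_T by blast
  have P_le_g: "P n x \<le> g x" if "x \<in> T" for n x
    using f_sums[of x] f_nonneg[of x] that sum_le_suminf[of "\<lambda>k. f k x" "{..<n}"]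
    by (auto simp: P_def T_def sums_iff)
  have "bounded (range (\<lambda>n. integral T (P n)))"
  proof -
    have "\<bar>integral T (P n)\<bar> \<le> integral S g" for n
    proof -
      have "0 \<le> integral T (P n)"
        using P_int f_nonneg by (intro integral_nonneg) (auto simp: P_def T_def sum_nonneg)
      moreover have "integral T (P n) \<le> integral T g"
        using P_int g_T P_le_g by (intro integral_le) auto
      ultimately show ?thesis using g_T by (simp add: integral_unique)
    qed
    then show ?thesis unfolding bounded_real by blast
  qed
  then have "(\<lambda>n. integral T (P n)) \<longlonglongrightarrow> integral T g"
    using P_int f_nonneg f_sums
    by (intro monotone_convergence_increasing[THEN conjunct2])
       (auto simp: P_def T_def sums_def)
  then show ?thesis
    using integral_unique[OF P_int] integral_unique[OF g_T] by (simp add: sums_def)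
qed

section \<open>The harmonic differences as integrals\<close>

lemma summable_gen_harm_terms:
  assumes "a > -1"
  shows "summable (\<lambda>k. 1 / real (Suc k) - 1 / (real (Suc k) + a))"
proof (rule summable_comparison_test')
  show "summable (\<lambda>k. 2 * \<bar>a\<bar> * (1 / (real k + 1)^2))"
    using sums_summable[OF inverse_squares_sums] by (intro summable_mult) (simp add: add.commute)
next
  fix k :: nat
  assume "k \<ge> 1"
  then have half: "(real k + 1) / 2 \<le> real k + 1 + a" and pos: "0 < real k + 1 + a"
    using assms by auto
  have "1 / real (Suc k) - 1 / (real (Suc k) + a) = a / ((real k + 1) * (real k + 1 + a))"
    using pos by (simp add: field_simps)
  then have "norm (1 / real (Suc k) - 1 / (real (Suc k) + a)) = \<bar>a\<bar> / ((real k + 1) * (real k + 1 + a))"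
    using pos by (simp add: abs_mult)
  also have "\<dots> \<le> \<bar>a\<bar> / ((real k + 1) * ((real k + 1) / 2))"
    using half by (intro divide_left_mono mult_left_mono) auto
  also have "\<dots> = 2 * \<bar>a\<bar> * (1 / (real k + 1)^2)"
    by (simp add: power2_eq_square)
  finally show "norm (1 / real (Suc k) - 1 / (real (Suc k) + a)) \<le> 2 * \<bar>a\<bar> * (1 / (real k + 1)^2)" .
qed

definition harm_gap :: "nat \<Rightarrow> real" where
  "harm_gap n = gen_harm (real n) - gen_harm (real n - 1/2)"

lemma harm_gap_sums: "(\<lambda>k. 1 / (real k + real n + 1/2) - 1 / (real k + real n + 1)) sums harm_gap n"
proof -
  have "(\<lambda>k. (1 / real (Suc k) - 1 / (real (Suc k) + real n))
          - (1 / real (Suc k) - 1 / (real (Suc k) + (real n - 1/2)))) sums harm_gap n"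
    unfolding harm_gap_def gen_harm_def
    by (intro sums_diff summable_sums summable_gen_harm_terms) auto
  then show ?thesis by (simp add: algebra_simps)
qed

lemma has_integral_power_01: "((\<lambda>x::real. x ^ m) has_integral 1 / (real m + 1)) {0..1}"
proof -
  have "((\<lambda>x::real. x ^ m) has_integral 1 ^ Suc m / real (Suc m) - 0 ^ Suc m / real (Suc m)) {0..1}"
  proof (intro fundamental_theorem_of_calculus)
    fix x :: real
    have "((\<lambda>x. x ^ Suc m / real (Suc m)) has_real_derivative real (Suc m) * x ^ m / real (Suc m)) (at x)"
      using DERIV_pow[of "Suc m" x] by (intro DERIV_cdivide) simp
    then show "((\<lambda>x. x ^ Suc m / real (Suc m)) has_vector_derivative x ^ m) (at x within {0..1})"
      by (simp add: has_real_derivative_iff_has_vector_derivative has_vector_derivative_at_within)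
  qed simp
  then show ?thesis by (simp add: add.commute)
qed

lemma has_integral_harm_gap: "((\<lambda>u. 2 * u ^ (2*n) / (1 + u)) has_integral harm_gap n) {0..1}"
proof -
  (* pairing consecutive terms of the alternating expansion of 2u^(2n)/(1+u) makes them nonnegative *)
  define f where "f k u = 2 * u ^ (2*n+2*k) - 2 * u ^ (2*n+2*k+1)" for k and u :: real
  have f_int: "(f k has_integral 1 / (real k + real n + 1/2) - 1 / (real k + real n + 1)) {0..1}" for k
  proof -
    have "(f k has_integral 2 * (1 / (real (2*n+2*k) + 1)) - 2 * (1 / (real (2*n+2*k+1) + 1))) {0..1}"
      unfolding f_def by (intro has_integral_diff has_integral_mult_right has_integral_power_01)
    moreover have "2 * (1 / (real (2*n+2*k) + 1)) = 1 / (real k + real n + 1/2)"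
      and "2 * (1 / (real (2*n+2*k+1) + 1)) = 1 / (real k + real n + 1)"
      by (simp_all add: field_simps)
    ultimately show ?thesis by simp
  qed
  have f_nonneg: "0 \<le> f k u" if "u \<in> {0..1}" for k u
    using that power_decreasing[of "2*n+2*k" "2*n+2*k+1" u] by (simp add: f_def)
  have f_sums: "(\<lambda>k. f k u) sums (2 * u ^ (2*n) / (1 + u))" if "u \<in> {0..1} - {1}" for u
  proof -
    have "norm (u^2) < 1" using that by (simp add: abs_square_less_1)
    then have "(\<lambda>k. 2 * u ^ (2*n) * (1 - u) * (u^2) ^ k) sums (2 * u ^ (2*n) * (1 - u) * (1 / (1 - u^2)))"
      by (intro sums_mult geometric_sums)
    moreover have "2 * u ^ (2*n) * (1 - u) * (u^2) ^ k = f k u" for k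
      by (simp add: f_def power_add algebra_simps flip: power_mult)
    moreover have "2 * u ^ (2*n) * (1 - u) * (1 / (1 - u^2)) = 2 * u ^ (2*n) / (1 + u)"
    proof -
      have "1 - u^2 = (1 - u) * (1 + u)" by (simp add: power2_eq_square algebra_simps)
      then show ?thesis using that by simp
    qed
    ultimately show ?thesis by simp
  qed
  have integrable: "(\<lambda>u::real. 2 * u ^ (2*n) / (1 + u)) integrable_on {0..1}"
    by (intro integrable_continuous_interval continuous_intros) auto
  have "(\<lambda>k. 1 / (real k + real n + 1/2) - 1 / (real k + real n + 1)) sums integral {0..1} (\<lambda>u. 2 * u ^ (2*n) / (1 + u))"
    by (rule sums_integral_nonneg[OF f_int f_nonneg f_sums _ integrable]) auto
  then have "integral {0..1} (\<lambda>u. 2 * u ^ (2*n) / (1 + u)) = harm_gap n"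
    using harm_gap_sums sums_unique2 by blast
  then show ?thesis using integrable by (metis integrable_integral)
qed

lemma harm_gap_nonneg: "harm_gap n \<ge> 0"
  by (rule has_integral_nonneg[OF has_integral_harm_gap]) auto

section \<open>The generating function\<close>

definition ln1p_div :: "real \<Rightarrow> real" where
  "ln1p_div z = (if z = 0 then 1 else ln (1 + z) / z)"

lemma ln1p_div_nonzero: "z \<noteq> 0 \<Longrightarrow> ln1p_div z = ln (1 + z) / z"
  by (simp add: ln1p_div_def)

lemma isCont_ln1p_div:
  assumes "z > -1"
  shows "isCont ln1p_div z"
proof (cases "z = 0")
  case True
  have "((\<lambda>h. (ln (1 + h) - ln 1) / h) \<longlongrightarrow> 1) (at (0::real))"
    using DERIV_ln[of 1] by (simp add: DERIV_def)
  then have "(ln1p_div \<longlongrightarrow> 1) (at 0)"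
    by (rule Lim_transform_eventually) (auto simp: eventually_at_filter ln1p_div_def)
  with True show ?thesis
    by (simp add: isCont_def ln1p_div_def)
next
  case False
  have "eventually (\<lambda>x. ln1p_div x = ln (1 + x) / x) (nhds z)"
    using eventually_nhds_in_open[of "- {0}" z] False
    by (auto elim!: eventually_mono simp: ln1p_div_def)
  moreover have "isCont (\<lambda>x. ln (1 + x) / x) z"
    using assms False by (auto intro!: continuous_intros)
  ultimately show ?thesis by (simp add: isCont_cong)
qed

lemma continuous_on_ln1p_div: "continuous_on {0..} ln1p_div"
  by (rule continuous_at_imp_continuous_on) (auto intro!: isCont_ln1p_div)

lemma has_real_derivative_log_primitive:
  fixes y w u :: real
  assumes w: "w^2 = 1 - y" "w > 0" and "0 \<le> y" "0 \<le> u" "y * u^2 < 1"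
  shows "((\<lambda>u. (ln (1 + u) - ln (1 + y*u + w * sqrt (1 - y*u^2))) / w) has_real_derivative
          1 / ((1 + u) * sqrt (1 - y*u^2))) (at u)"
proof -
  define S where "S = sqrt (1 - y*u^2)"
  define N where "N = 1 + y*u + w * S"
  have S: "S > 0" "S^2 = 1 - y*u^2"
    using assms by (auto simp: S_def)
  have N: "N > 0"
    using assms S by (auto simp: N_def intro!: add_pos_nonneg)
  have deriv: "((\<lambda>u. (ln (1 + u) - ln (1 + y*u + w * sqrt (1 - y*u^2))) / w) has_real_derivative
          (1 / (1 + u) - (y + w * (- (y * (2 * u)) / (2 * S))) / N) / w) (at u)"
    using assms S N unfolding S_def N_def
    by (auto intro!: derivative_eq_intros simp: inverse_eq_divide)
  have key: "(1 + u) * (y * S - w * y * u) = N * (S - w)"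
  proof -
    have "N * (S - w) = S - w + y*u*S - w*y*u + w * S^2 - w^2 * S"
      by (simp add: N_def power2_eq_square algebra_simps)
    also have "\<dots> = (1 + u) * (y * S - w * y * u)"
      unfolding S w by (simp add: power2_eq_square algebra_simps)
    finally show ?thesis ..
  qed
  have "(1 / (1 + u) - (y + w * (- (y * (2 * u)) / (2 * S))) / N) / w
      = (N * S - (1 + u) * (y * S - w * y * u)) / (N * S * w * (1 + u))"
    using assms S N by (simp add: field_simps)
  also have "\<dots> = (N * w) / ((N * w) * ((1 + u) * S))"
    unfolding key by (simp add: algebra_simps)
  also have "\<dots> = 1 / ((1 + u) * S)"
    using N w by simp
  finally show ?thesis using deriv by (simp add: S_def)
qed

lemma has_integral_inverse_one_plus_sqrt:
  fixes y :: real
  assumes "0 \<le> y" "y < 1"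
  shows "((\<lambda>u. 1 / ((1 + u) * sqrt (1 - y*u^2))) has_integral ln1p_div (sqrt (1 - y))) {0..1}"
proof -
  define w where "w = sqrt (1 - y)"
  have w: "w^2 = 1 - y" "w > 0"
    using assms by (auto simp: w_def)
  define F where "F = (\<lambda>u. (ln (1 + u) - ln (1 + y*u + w * sqrt (1 - y*u^2))) / w)"
  have below_1: "y * u^2 < 1" if "u \<in> {0..1}" for u
    using assms that mult_left_le[of "u^2" y] by (auto simp: power_le_one)
  have "0 < 1 + y*u + w * sqrt (1 - y*u^2)" if "u \<in> {0..1}" for u
    using assms w that below_1[OF that] by (intro add_pos_nonneg) auto
  then have "continuous_on {0..1} F"
    unfolding F_def using assms w below_1 by (intro continuous_intros) force+
  moreover have "(F has_vector_derivative 1 / ((1 + u) * sqrt (1 - y*u^2))) (at u)"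
    if "u \<in> box 0 1" for u
    using has_real_derivative_log_primitive[OF w assms(1), of u] below_1[of u] that
    by (simp add: F_def has_real_derivative_iff_has_vector_derivative)
  ultimately have "((\<lambda>u. 1 / ((1 + u) * sqrt (1 - y*u^2))) has_integral F 1 - F 0) {0..1}"
    by (intro fundamental_theorem_of_calculus_interior) auto
  moreover have "F 1 = 0"
    using w by (simp add: F_def w_def[symmetric] power2_eq_square)
  moreover have "F 0 = - ln (1 + w) / w"
    by (simp add: F_def)
  ultimately show ?thesis
    using w by (simp add: w_def ln1p_div_nonzero)
qed

lemma central_ratio_harm_gap_sums:
  fixes y :: real
  assumes "0 \<le> y" "y < 1"
  shows "(\<lambda>n. central_ratio n * harm_gap n * y^n) sums (2 * ln1p_div (sqrt (1 - y)))"
proof -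
  define f where "f n u = central_ratio n * y^n * (2 * u ^ (2*n) / (1 + u))" for n u
  have f_int: "(f n has_integral central_ratio n * harm_gap n * y^n) {0..1}" for n
    unfolding f_def using has_integral_mult_right[OF has_integral_harm_gap, of "central_ratio n * y^n"]
    by (simp add: mult_ac)
  have f_nonneg: "0 \<le> f n u" if "u \<in> {0..1}" for n u
    using that assms central_ratio_pos[of n] by (simp add: f_def)
  have f_sums: "(\<lambda>n. f n u) sums (2 / ((1 + u) * sqrt (1 - y*u^2)))" if "u \<in> {0..1} - {1}" for u
  proof -
    have "\<bar>y * u^2\<bar> < 1"
      using assms that mult_left_le[of "u^2" y] by (auto simp: abs_mult power_le_one)
    from sums_mult[OF central_ratio_sums[OF this], of "2 / (1 + u)"]
    show ?thesis
      by (simp add: f_def power_mult_distrib mult_ac flip: power_mult)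
  qed
  have "((\<lambda>u. 2 / ((1 + u) * sqrt (1 - y*u^2))) has_integral 2 * ln1p_div (sqrt (1 - y))) {0..1}"
    using has_integral_mult_right[OF has_integral_inverse_one_plus_sqrt[OF assms], of 2] by simp
  with sums_integral_nonneg[OF f_int f_nonneg f_sums] show ?thesis
    by (auto simp: integral_unique)
qed

lemma continuous_on_ln1p_div_sqrt_sin:
  fixes S :: "real set"
  shows "continuous_on S (\<lambda>t. ln1p_div (sqrt (1 - sin t ^ 4)))"
proof (rule continuous_on_compose2[OF continuous_on_ln1p_div])
  show "continuous_on S (\<lambda>t. sqrt (1 - sin t ^ 4))"
    by (intro continuous_intros)
  have "sin t ^ 4 \<le> 1" for t :: real
    using power_le_one[of "\<bar>sin t\<bar>" 4] by (simp add: abs_sin_le_one)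
  then show "(\<lambda>t. sqrt (1 - sin t ^ 4)) ` S \<subseteq> {0..}"
    by auto
qed

lemma central_ratio_product_sums_integral:
  "(\<lambda>n. central_ratio (2*n) * central_ratio n * harm_gap n) sums
     (4 / pi * integral {0..pi/2} (\<lambda>t. ln1p_div (sqrt (1 - sin t ^ 4))))"
proof -
  define f where "f = (\<lambda>n t. 2 / pi * (central_ratio n * harm_gap n * (sin t ^ 4) ^ n))"
  define g where "g = (\<lambda>t. 4 / pi * ln1p_div (sqrt (1 - sin t ^ 4)))"
  have f_int: "(f n has_integral central_ratio (2*n) * central_ratio n * harm_gap n) {0..pi/2}" for n
    using has_integral_mult_right[OF has_integral_sin_power_even[of "2*n"], of "2 / pi * (central_ratio n * harm_gap n)"]
    by (simp add: f_def mult_ac flip: power_mult)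
  have f_nonneg: "0 \<le> f n t" if "t \<in> {0..pi/2}" for n t
    using that central_ratio_pos[of n] harm_gap_nonneg[of n] sin_ge_zero[of t]
    by (simp add: f_def)
  have f_sums: "(\<lambda>n. f n t) sums g t" if "t \<in> {0..pi/2} - {pi/2}" for t
  proof -
    have "0 \<le> sin t" "sin t < 1"
      using that sin_ge_zero[of t] sin_mono_less_eq[of t "pi/2"] by auto
    then have "0 \<le> sin t ^ 4" "sin t ^ 4 < 1"
      by (auto simp: power_less_one_iff)
    from sums_mult[OF central_ratio_harm_gap_sums[OF this], of "2 / pi"]
    show ?thesis by (simp add: f_def g_def)
  qed
  have "g integrable_on {0..pi/2}"
    unfolding g_def
    by (intro integrable_continuous_interval continuous_intros continuous_on_ln1p_div_sqrt_sin)
  from sums_integral_nonneg[where N="{pi/2}", OF f_int f_nonneg f_sums _ this] show ?thesis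
    by (simp add: g_def)
qed

section \<open>The dilogarithm\<close>

lemma ln1p_div_sums:
  assumes "\<bar>z\<bar> < 1"
  shows "(\<lambda>n. (-1)^n * z^n / (real n + 1)) sums ln1p_div z"
proof (cases "z = 0")
  case True
  then have "(\<lambda>n. (-1)^n * z^n / (real n + 1)) = (\<lambda>n. if n = 0 then 1 else 0)"
    by (auto simp: fun_eq_iff)
  then show ?thesis
    using True sums_single[of 0 "\<lambda>_. 1::real"] by (simp add: ln1p_div_def)
next
  case False
  have "(\<lambda>n. - ((-z)^Suc n) / real (Suc n)) sums ln (1 + z)"
    using ln_series'[OF assms] by (subst sums_Suc_iff) simp
  from sums_divide[OF this, of z] False show ?thesis
    by (simp add: ln1p_div_nonzero power_minus' add.commute)
qed

lemma alternating_inverse_squares_sums: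
  "(\<lambda>k. 1 / (2 * real k + 1)^2 - 1 / (2 * real k + 2)^2) sums (pi^2 / 12)"
proof -
  have squares: "(\<lambda>n. 1 / (real n + 1)^2) sums (pi^2 / 6)"
    using inverse_squares_sums by (simp add: add.commute)
  have "(\<lambda>k. \<Sum>n\<in>{k*2..<k*2+2}. 1 / (real n + 1)^2) sums (pi^2 / 6)"
    using sums_group[OF squares, of 2] by simp
  moreover have "{k*2..<k*2+2} = {2*k, 2*k+1}" for k :: nat
    by auto
  ultimately have pairs: "(\<lambda>k. 1 / (2 * real k + 1)^2 + 1 / (2 * real k + 2)^2) sums (pi^2 / 6)"
    by (simp add: algebra_simps)
  have "(\<lambda>k. 1/2 * (1 / (real k + 1)^2)) sums (1/2 * (pi^2 / 6))"
    using sums_mult[OF squares] .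
  moreover have "1/2 * (1 / (real k + 1)^2) = 2 * (1 / (2 * real k + 2)^2)" for k
  proof -
    have "(2 * real k + 2)^2 = 4 * (real k + 1)^2"
      by (simp add: power2_eq_square algebra_simps)
    then show ?thesis by simp
  qed
  ultimately have "(\<lambda>k. 2 * (1 / (2 * real k + 2)^2)) sums (pi^2 / 12)"
    by simp
  from sums_diff[OF pairs this] show ?thesis
    by simp
qed

(* For x >= 0 this is -Li2(-x). *)
definition neg_dilog :: "real \<Rightarrow> real" where
  "neg_dilog x = integral {0..x} ln1p_div"

lemma has_real_derivative_neg_dilog:
  assumes "x > 0"
  shows "(neg_dilog has_real_derivative ln1p_div x) (at x)"
proof -
  have "(neg_dilog has_real_derivative ln1p_div x) (at x within {0..x+1})"
    unfolding neg_dilog_def using assms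
    by (intro integral_has_real_derivative continuous_on_subset[OF continuous_on_ln1p_div]) auto
  moreover have "at x within {0..x+1} = at x"
    using assms by (intro at_within_Icc_at) auto
  ultimately show ?thesis by simp
qed

lemma continuous_on_neg_dilog: "continuous_on {0..b} neg_dilog"
  unfolding neg_dilog_def
  by (intro indefinite_integral_continuous_1 integrable_continuous_real
      continuous_on_subset[OF continuous_on_ln1p_div]) auto

lemma neg_dilog_inversion:
  assumes "R > 0"
  shows "neg_dilog R + neg_dilog (1/R) = 2 * neg_dilog 1 + (ln R)^2 / 2"
proof -
  define \<phi> where "\<phi> x = neg_dilog x + neg_dilog (1/x) - (ln x)^2 / 2" for x
  have "(\<phi> has_real_derivative 0) (at x within {0<..})" if "x \<in> {0<..}" for x
  proof -
    from that have x: "x > 0" by simp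
    have "((\<lambda>x. neg_dilog (1/x)) has_real_derivative ln1p_div (1/x) * (- 1 / x^2)) (at x)"
      using x by (intro DERIV_chain2[OF has_real_derivative_neg_dilog])
        (auto intro!: derivative_eq_intros simp: power2_eq_square)
    then have "(\<phi> has_real_derivative ln1p_div x + ln1p_div (1/x) * (- 1 / x^2) - ln x / x) (at x)"
      unfolding \<phi>_def using x
      by (auto intro!: derivative_eq_intros has_real_derivative_neg_dilog simp: field_simps)
    moreover have "ln1p_div (1/x) = x * (ln (1 + x) - ln x)"
    proof -
      have "1 + 1/x = (1 + x) / x" using x by (simp add: field_simps)
      then show ?thesis using x by (simp add: ln1p_div_nonzero ln_div)
    qed
    moreover have "ln1p_div x = ln (1 + x) / x"
      using x by (simp add: ln1p_div_nonzero)
    ultimately show ?thesis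
      using x by (simp add: field_simps power2_eq_square has_field_derivative_at_within)
  qed
  then obtain c where "\<forall>x\<in>{0<..}. \<phi> x = c"
    using has_field_derivative_zero_constant[of "{0<..}" \<phi>] by auto
  then have "\<phi> R = \<phi> 1"
    using assms by simp
  then show ?thesis
    by (simp add: \<phi>_def)
qed

lemma neg_dilog_1: "neg_dilog 1 = pi^2 / 12"
proof -
  (* the series of ln1p_div, grouped in pairs as in has_integral_harm_gap *)
  define f where "f = (\<lambda>k z. z^(2*k) / (2 * real k + 1) - z^(2*k+1) / (2 * real k + 2))"
  have f_int: "(f k has_integral 1 / (2 * real k + 1)^2 - 1 / (2 * real k + 2)^2) {0..1}" for k
    using has_integral_diff[OF has_integral_mult_right[OF has_integral_power_01, of "1 / (2 * real k + 1)" "2*k"]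
      has_integral_mult_right[OF has_integral_power_01, of "1 / (2 * real k + 2)" "2*k+1"]]
    by (simp add: f_def power2_eq_square add_ac)
  have f_nonneg: "0 \<le> f k z" if "z \<in> {0..1}" for k z
  proof -
    have "z^(2*k+1) / (2 * real k + 2) \<le> z^(2*k) / (2 * real k + 2)"
      using that power_decreasing[of "2*k" "2*k+1" z] by (intro divide_right_mono) auto
    also have "\<dots> \<le> z^(2*k) / (2 * real k + 1)"
      using that by (intro divide_left_mono) auto
    finally show ?thesis by (simp add: f_def)
  qed
  have f_sums: "(\<lambda>k. f k z) sums ln1p_div z" if "z \<in> {0..1} - {1}" for z
  proof -
    have "(\<lambda>k. \<Sum>n\<in>{k*2..<k*2+2}. (-1)^n * z^n / (real n + 1)) sums ln1p_div z"
      using that sums_group[OF ln1p_div_sums, of z 2] by simp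
    moreover have "{k*2..<k*2+2} = {2*k, 2*k+1}" for k :: nat
      by auto
    ultimately show ?thesis
      by (simp add: f_def algebra_simps)
  qed
  have "(\<lambda>k. 1 / (2 * real k + 1)^2 - 1 / (2 * real k + 2)^2) sums neg_dilog 1"
    unfolding neg_dilog_def
    by (rule sums_integral_nonneg[where N="{1}", OF f_int f_nonneg f_sums])
       (auto intro!: integrable_continuous_real continuous_on_subset[OF continuous_on_ln1p_div])
  with alternating_inverse_squares_sums show ?thesis
    using sums_unique2 by blast
qed

section \<open>The angular integral\<close>

lemma has_real_derivative_neg_dilog_square:
  assumes "c > 0" "y > 0"
  shows "((\<lambda>y. neg_dilog (c * y^2) / 2) has_real_derivative ln (1 + c * y^2) / y) (at y)"
proof -
  have "((\<lambda>y. neg_dilog (c * y^2) / 2) has_real_derivative ln1p_div (c * y^2) * (c * (2 * y)) / 2) (at y)"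
    using assms
    by (auto intro!: DERIV_cdivide DERIV_chain2[OF has_real_derivative_neg_dilog] derivative_eq_intros)
  then show ?thesis
    using assms by (simp add: ln1p_div_nonzero power2_eq_square field_simps)
qed

definition quartic :: "real \<Rightarrow> real" where
  "quartic y = 1 + 6 * y^2 + y^4"

lemma silver_square_plus_inverse: "(1 + sqrt 2)^2 + 1 / (1 + sqrt 2)^2 = (6::real)"
proof -
  have "0 < 1 + sqrt (2::real)"
    using real_sqrt_ge_zero[of 2] by linarith
  moreover have "(1 + sqrt 2) * (sqrt 2 - 1) = (1::real)"
    by (simp add: algebra_simps)
  ultimately have "1 / (1 + sqrt 2)^2 = (sqrt 2 - 1)^2"
    by (simp add: field_simps flip: power_mult_distrib)
  then show ?thesis
    by (simp add: power2_eq_square algebra_simps)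
qed

lemma has_real_derivative_quartic_primitive:
  assumes "a > 0" "a + 1/a = 6" "y > 0"
  shows "((\<lambda>y. 4 * neg_dilog y - neg_dilog (a * y^2) / 2 - neg_dilog (1/a * y^2) / 2)
           has_real_derivative (4 * ln (1 + y) - ln (quartic y)) / y) (at y)"
proof -
  have "(1 + a * y^2) * (1 + 1/a * y^2) = 1 + (a + 1/a) * y^2 + y^4"
    using assms(1) by (simp add: power2_eq_square power4_eq_xxxx algebra_simps)
  then have "quartic y = (1 + a * y^2) * (1 + 1/a * y^2)"
    unfolding assms(2) quartic_def by simp
  moreover have "0 < 1 + a * y^2" "0 < 1 + 1/a * y^2"
    using assms(1) by (auto intro!: add_pos_nonneg)
  ultimately have ln_quartic: "ln (quartic y) = ln (1 + a * y^2) + ln (1 + 1/a * y^2)"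
    by (simp add: ln_mult)
  have "((\<lambda>y. 4 * neg_dilog y) has_real_derivative 4 * (ln (1 + y) / y)) (at y)"
    using assms DERIV_cmult[OF has_real_derivative_neg_dilog] by (simp add: ln1p_div_nonzero)
  then have "((\<lambda>y. 4 * neg_dilog y - neg_dilog (a * y^2) / 2 - neg_dilog (1/a * y^2) / 2) has_real_derivative
      4 * (ln (1 + y) / y) - ln (1 + a * y^2) / y - ln (1 + 1/a * y^2) / y) (at y)"
    using assms by (intro DERIV_diff has_real_derivative_neg_dilog_square) auto
  moreover have "4 * (ln (1 + y) / y) - ln (1 + a * y^2) / y - ln (1 + 1/a * y^2) / y
      = (4 * ln (1 + y) - ln (quartic y)) / y"
    unfolding ln_quartic by (simp add: diff_divide_distrib add_divide_distrib)
  ultimately show ?thesis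
    by simp
qed

lemma continuous_on_neg_dilog_scaled_square:
  assumes "c \<ge> 0"
  shows "continuous_on {0..1} (\<lambda>y. neg_dilog (c * y^2))"
proof (rule continuous_on_compose2[OF continuous_on_neg_dilog[of c]])
  show "(\<lambda>y. c * y^2) ` {0..1} \<subseteq> {0..c}"
    using assms mult_left_le[of "y^2" c for y] by (auto simp: power_le_one)
qed (intro continuous_intros)

lemma has_integral_ln_quartic:
  "((\<lambda>y. (4 * ln (1 + y) - ln (quartic y)) / y) has_integral pi^2 / 4 - (ln (1 + sqrt 2))^2) {0..1}"
proof -
  define a :: real where "a = (1 + sqrt 2)^2"
  have a: "a > 0" "a + 1/a = 6"
    using silver_square_plus_inverse real_sqrt_ge_zero[of 2] by (auto simp: a_def)
  define \<Psi> where "\<Psi> = (\<lambda>y. 4 * neg_dilog y - neg_dilog (a * y^2) / 2 - neg_dilog (1/a * y^2) / 2)"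
  have "continuous_on {0..1} \<Psi>"
    unfolding \<Psi>_def using a(1) continuous_on_subset[OF continuous_on_neg_dilog[of 1]]
    by (intro continuous_intros continuous_on_neg_dilog_scaled_square) auto
  moreover have "(\<Psi> has_vector_derivative (4 * ln (1 + y) - ln (quartic y)) / y) (at y)"
    if "y \<in> box 0 1" for y
    using has_real_derivative_quartic_primitive[OF a, of y] that
    by (simp add: \<Psi>_def has_real_derivative_iff_has_vector_derivative)
  ultimately have "((\<lambda>y. (4 * ln (1 + y) - ln (quartic y)) / y) has_integral \<Psi> 1 - \<Psi> 0) {0..1}"
    by (intro fundamental_theorem_of_calculus_interior) auto
  moreover have "\<Psi> 1 - \<Psi> 0 = pi^2 / 4 - (ln (1 + sqrt 2))^2"
  proof -
    have "ln a = 2 * ln (1 + sqrt 2)"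
      using \<open>a > 0\<close> by (simp add: a_def ln_realpow)
    then have "neg_dilog a + neg_dilog (1/a) = pi^2 / 6 + 2 * (ln (1 + sqrt 2))^2"
      using neg_dilog_inversion[OF a(1)] by (simp add: neg_dilog_1 power_mult_distrib)
    moreover have "neg_dilog 0 = 0"
      by (simp add: neg_dilog_def)
    ultimately show ?thesis
      by (simp add: \<Psi>_def neg_dilog_1)
  qed
  ultimately show ?thesis
    by simp
qed

lemma quartic_ge_1: "quartic y \<ge> 1"
  by (simp add: quartic_def)

lemma quartic_minus_square: "quartic y - (1 - y^2)^2 = 8 * y^2"
  by (simp add: quartic_def power2_eq_square power4_eq_xxxx algebra_simps)

definition sin_subst :: "real \<Rightarrow> real" where
  "sin_subst y = (1 - y^2) / sqrt (quartic y)"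

lemma sin_subst_bounds:
  assumes "\<bar>y\<bar> \<le> 1"
  shows "0 \<le> sin_subst y" "sin_subst y \<le> 1" "y \<noteq> 0 \<Longrightarrow> sin_subst y < 1"
proof -
  have q: "sqrt (quartic y) > 0"
    using quartic_ge_1[of y] by simp
  have "0 \<le> 1 - y^2"
    using assms abs_le_square_iff[of y 1] by simp
  then show "0 \<le> sin_subst y"
    using q by (simp add: sin_subst_def)
  have "(1 - y^2)^2 \<le> quartic y"
    using quartic_minus_square[of y] zero_le_power2[of y] by linarith
  then have "1 - y^2 \<le> sqrt (quartic y)"
    by (rule real_le_rsqrt)
  then show "sin_subst y \<le> 1"
    using q by (simp add: sin_subst_def)
  assume "y \<noteq> 0"
  then have "0 < y^2"
    by simp
  then have "(1 - y^2)^2 < quartic y"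
    using quartic_minus_square[of y] by linarith
  then have "1 - y^2 < sqrt (quartic y)"
    by (rule real_less_rsqrt)
  then show "sin_subst y < 1"
    using q by (simp add: sin_subst_def)
qed

lemma one_minus_sin_subst_square: "1 - (sin_subst y)^2 = 8 * y^2 / quartic y"
  using quartic_minus_square[of y] quartic_ge_1[of y]
  by (simp add: sin_subst_def power_divide field_simps)

lemma one_minus_sin_subst_pow4: "1 - (sin_subst y)^4 = (4 * y * (1 + y^2) / quartic y)^2"
proof -
  have q: "quartic y > 0"
    using quartic_ge_1[of y] by simp
  have "sqrt (quartic y) ^ 4 = (sqrt (quartic y) ^ 2) ^ 2"
    by (simp flip: power_mult)
  then have "(sin_subst y)^4 = (1 - y^2)^4 / (quartic y)^2"
    using q by (simp add: sin_subst_def power_divide)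
  then have "1 - (sin_subst y)^4 = ((quartic y)^2 - (1 - y^2)^4) / (quartic y)^2"
    using q by (simp add: field_simps)
  also have "(quartic y)^2 - (1 - y^2)^4 = (4 * y * (1 + y^2))^2"
    by (simp add: quartic_def power2_eq_square power4_eq_xxxx algebra_simps)
  finally show ?thesis
    by (simp add: power_divide)
qed

lemma has_real_derivative_sin_subst:
  "(sin_subst has_real_derivative - 8 * y * (1 + y^2) / (quartic y * sqrt (quartic y))) (at y)"
proof -
  define S where "S = sqrt (quartic y)"
  have S: "S > 0" "S^2 = quartic y"
    using quartic_ge_1[of y] by (auto simp: S_def)
  have deriv: "(sin_subst has_real_derivative
      (- (2 * y) * S - (1 - y^2) * (inverse S / 2 * (12 * y + 4 * y^3))) / S^2) (at y)"
    unfolding sin_subst_def S_def using S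
    by (auto intro!: derivative_eq_intros simp: quartic_def S_def power2_eq_square)
  have "(- (2 * y) * S - (1 - y^2) * (inverse S / 2 * (12 * y + 4 * y^3))) / S^2
      = (- (2 * y) * S^2 - (1 - y^2) * (6 * y + 2 * y^3)) / (S^2 * S)"
    using S(1) by (simp add: field_simps power2_eq_square power4_eq_xxxx)
  also have "- (2 * y) * S^2 - (1 - y^2) * (6 * y + 2 * y^3) = - 8 * y * (1 + y^2)"
    unfolding S(2) quartic_def by (simp add: power2_eq_square power3_eq_cube power4_eq_xxxx algebra_simps)
  also have "- 8 * y * (1 + y^2) / (S^2 * S) = - 8 * y * (1 + y^2) / (quartic y * S)"
    by (simp add: S(2))
  finally show ?thesis
    using deriv by (simp add: S_def)
qed

lemma has_real_derivative_arcsin_sin_subst: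
  assumes "0 < y" "y < 1"
  shows "((\<lambda>y. arcsin (sin_subst y)) has_real_derivative - 2 * sqrt 2 * (1 + y^2) / quartic y) (at y)"
proof -
  have "-1 < sin_subst y" "sin_subst y < 1"
    using assms sin_subst_bounds[of y] by auto
  from DERIV_chain2[OF DERIV_arcsin[OF this] has_real_derivative_sin_subst]
  have deriv: "((\<lambda>y. arcsin (sin_subst y)) has_real_derivative
      inverse (sqrt (1 - (sin_subst y)^2)) * (- 8 * y * (1 + y^2) / (quartic y * sqrt (quartic y)))) (at y)" .
  have "sqrt (8::real) = 2 * sqrt 2"
    using real_sqrt_mult[of 4 2] by simp
  then have sqrt_eq: "sqrt (1 - (sin_subst y)^2) = 2 * sqrt 2 * y / sqrt (quartic y)"
    using assms by (simp add: one_minus_sin_subst_square real_sqrt_divide real_sqrt_mult)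
  have "quartic y > 0" "sqrt 2 * sqrt 2 = (2::real)"
    using quartic_ge_1[of y] by auto
  then have "inverse (sqrt (1 - (sin_subst y)^2)) * (- 8 * y * (1 + y^2) / (quartic y * sqrt (quartic y)))
      = - 2 * sqrt 2 * (1 + y^2) / quartic y"
    using assms unfolding sqrt_eq by (simp add: field_simps)
  with deriv show ?thesis
    by simp
qed

lemma ln1p_div_sqrt_sin_subst:
  assumes "0 < y"
  shows "- 2 * sqrt 2 * (1 + y^2) / quartic y * ln1p_div (sqrt (1 - (sin_subst y)^4))
    = - (sqrt 2 / 2) * ((4 * ln (1 + y) - ln (quartic y)) / y)"
proof -
  define L where "L = 4 * ln (1 + y) - ln (quartic y)"
  define W where "W = 4 * y * (1 + y^2) / quartic y"
  have q: "quartic y > 0"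
    using quartic_ge_1[of y] by simp
  have W: "W > 0" "quartic y * W = 4 * y * (1 + y^2)"
    using assms q by (simp_all add: W_def add_pos_nonneg)
  have "1 + W = (1 + y)^4 / quartic y"
    using q by (simp add: W_def quartic_def field_simps power2_eq_square power4_eq_xxxx)
  then have "ln (1 + W) = L"
    using assms q by (simp add: L_def ln_div ln_realpow)
  moreover have "sqrt (1 - (sin_subst y)^4) = W"
    using W by (simp add: one_minus_sin_subst_pow4 W_def[symmetric])
  ultimately have "ln1p_div (sqrt (1 - (sin_subst y)^4)) = L / W"
    using W by (simp add: ln1p_div_nonzero)
  then have "- 2 * sqrt 2 * (1 + y^2) / quartic y * ln1p_div (sqrt (1 - (sin_subst y)^4))
      = - 2 * sqrt 2 * (1 + y^2) * L / (quartic y * W)"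
    by simp
  also have "\<dots> = - 2 * sqrt 2 * (1 + y^2) * L / (4 * y * (1 + y^2))"
    by (simp only: W(2))
  also have "\<dots> = (1 + y^2) * (- 2 * sqrt 2 * L) / ((1 + y^2) * (4 * y))"
    by (simp add: mult_ac)
  also have "\<dots> = - 2 * sqrt 2 * L / (4 * y)"
    using zero_le_power2[of y] by (intro nonzero_mult_divide_mult_cancel_left) linarith
  also have "\<dots> = - (sqrt 2 / 2) * (L / y)"
    by simp
  finally show ?thesis
    by (simp only: L_def)
qed

lemma continuous_on_sin_subst: "continuous_on S sin_subst"
proof -
  have "continuous_on S quartic"
    unfolding quartic_def by (intro continuous_intros)
  moreover have "sqrt (quartic y) \<noteq> 0" for y
    using quartic_ge_1[of y] by simp
  ultimately show ?thesis
    unfolding sin_subst_def by (intro continuous_intros) auto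
qed

lemma has_integral_substitution_sin_subst:
  assumes "continuous_on {0..pi/2} G"
  shows "((\<lambda>y. - 2 * sqrt 2 * (1 + y^2) / quartic y * G (arcsin (sin_subst y)))
           has_integral - integral {0..pi/2} G) {0..1}"
proof -
  define g where "g = (\<lambda>y. arcsin (sin_subst y))"
  have sub: "((\<lambda>y. (- 2 * sqrt 2 * (1 + y^2) / quartic y) *\<^sub>R G (g y)) has_integral
      integral {g 0..g 1} G - integral {g 1..g 0} G) {0..1}"
  proof (rule has_integral_substitution_general[of "{0,1}" 0 1 g 0 "pi/2"])
    show "g ` {0..1} \<subseteq> {0..pi/2}"
    proof
      fix t assume "t \<in> g ` {0..1}"
      then obtain y where y: "y \<in> {0..1}" "t = g y" by blast
      then have "0 \<le> sin_subst y" "sin_subst y \<le> 1"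
        using sin_subst_bounds[of y] by auto
      then show "t \<in> {0..pi/2}"
        using y arcsin_le_arcsin[of 0 "sin_subst y"] arcsin_le_arcsin[of "sin_subst y" 1]
        by (simp add: g_def)
    qed
    have "sin_subst ` {0..1} \<subseteq> {-1..1}"
    proof (intro image_subsetI)
      fix y :: real
      assume "y \<in> {0..1}"
      then show "sin_subst y \<in> {-1..1}"
        using sin_subst_bounds(1,2)[of y] by auto
    qed
    then show "continuous_on {0..1} g"
      unfolding g_def by (intro continuous_on_compose2[OF continuous_on_arcsin' continuous_on_sin_subst])
    show "(g has_real_derivative - 2 * sqrt 2 * (1 + y^2) / quartic y) (at y within {0..1})"
      if "y \<in> {0..1} - {0,1}" for y
      using that has_real_derivative_arcsin_sin_subst[of y]
      by (auto simp: g_def intro: has_field_derivative_at_within)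
  qed (use assms in auto)
  have g_ends: "g 0 = pi/2" "g 1 = 0"
    by (simp_all add: g_def sin_subst_def quartic_def)
  from sub show ?thesis
    unfolding g_ends by (simp add: g_def)
qed

lemma has_integral_ln1p_div_sqrt_sin:
  "((\<lambda>t. ln1p_div (sqrt (1 - sin t ^ 4))) has_integral sqrt 2 / 2 * (pi^2 / 4 - (ln (1 + sqrt 2))^2)) {0..pi/2}"
proof -
  define G where "G = (\<lambda>t. ln1p_div (sqrt (1 - sin t ^ 4)))"
  have G_cont: "continuous_on {0..pi/2} G"
    unfolding G_def by (rule continuous_on_ln1p_div_sqrt_sin)
  have pointwise: "- (sqrt 2 / 2) * ((4 * ln (1 + y) - ln (quartic y)) / y)
      = - 2 * sqrt 2 * (1 + y^2) / quartic y * G (arcsin (sin_subst y))"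
    if "y \<in> {0..1} - {0,1}" for y
  proof -
    have "sin (arcsin (sin_subst y)) = sin_subst y"
      using that sin_subst_bounds[of y] by (simp add: sin_arcsin)
    then show ?thesis
      using that ln1p_div_sqrt_sin_subst[of y] by (simp add: G_def)
  qed
  have "((\<lambda>y. - (sqrt 2 / 2) * ((4 * ln (1 + y) - ln (quartic y)) / y))
      has_integral - integral {0..pi/2} G) {0..1}"
    by (rule has_integral_spike_finite[of "{0,1}", OF _ pointwise has_integral_substitution_sin_subst[OF G_cont]])
       simp
  moreover have "((\<lambda>y. - (sqrt 2 / 2) * ((4 * ln (1 + y) - ln (quartic y)) / y))
      has_integral - (sqrt 2 / 2) * (pi^2 / 4 - (ln (1 + sqrt 2))^2)) {0..1}"
    by (intro has_integral_mult_right has_integral_ln_quartic)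
  ultimately have "- integral {0..pi/2} G = - (sqrt 2 / 2) * (pi^2 / 4 - (ln (1 + sqrt 2))^2)"
    by (rule has_integral_unique)
  then have "integral {0..pi/2} G = sqrt 2 / 2 * (pi^2 / 4 - (ln (1 + sqrt 2))^2)"
    by simp
  with integrable_integral[OF integrable_continuous_real[OF G_cont]] show ?thesis
    by (simp only: G_def)
qed

lemma central_binomial_term_eq:
  "real ((4*n) choose (2*n)) * real ((2*n) choose n) * (gen_harm (real n) - gen_harm (real n - 1/2)) / 64 ^ n
    = central_ratio (2*n) * central_ratio n * harm_gap n"
proof -
  have "(64::real) ^ n = 4 ^ (2*n) * 4 ^ n"
    by (simp add: power_mult flip: power_mult_distrib)
  then show ?thesis
    by (simp add: central_ratio_def harm_gap_def mult.commute[of 2])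
qed

theorem mainTheorem4:
  shows "(\<lambda>n::nat. real ((4*n) choose (2*n)) * real ((2*n) choose n)
            * (gen_harm (real n) - gen_harm (real n - 1/2)) / 64 ^ n)
         sums (pi / sqrt 2 - 2 * sqrt 2 / pi * (ln (sqrt 2 + 1))^2)"
proof -
  have "(\<lambda>n. central_ratio (2*n) * central_ratio n * harm_gap n)
      sums (4 / pi * (sqrt 2 / 2 * (pi^2 / 4 - (ln (1 + sqrt 2))^2)))"
    using central_ratio_product_sums_integral integral_unique[OF has_integral_ln1p_div_sqrt_sin] by simp
  moreover have "4 / pi * (sqrt 2 / 2 * (pi^2 / 4 - (ln (1 + sqrt 2))^2))
      = pi / sqrt 2 - 2 * sqrt 2 / pi * (ln (sqrt 2 + 1))^2"
  proof -
    have "sqrt 2 * sqrt 2 = (2::real)"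
      by simp
    then show ?thesis
      by (simp add: field_simps power2_eq_square add.commute)
  qed
  ultimately show ?thesis
    by (simp only: central_binomial_term_eq)
qed

end
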